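(* For every $X\in\{\mathsf{T},\mathsf{S}\}^*$, $X\mathsf{T}\mathsf{S}\mathsf{T}\sqsubseteq X\mathsf{T}$.
   Context: Fix attribute–taxonomy pairs $A_1{:}T_1,\dots,A_d{:}T_d$ with distinct attribute names, where each taxonomy $T_i=(V_i,\le_{V_i})$ is a poset. A t-tuple over a t-schema $S\subseteq\{A_1{:}T_1,\dots,A_d{:}T_d\}$ maps each $A_i$ in $S$ to a value of $V_i$; $\mathcal{D}$ is the set of all t-tuples over all such t-schemas. A preference relation is a binary relation $\succeq$ on $\mathcal{D}$. Preferences are given by a formula $F(x,y)=\bigvee_i P_i(x,y)$, a disjunction of statements; each statement $P_i$ is a disjunction of clauses, each clause a satisfiable conjunction of atoms of the forms $x[A_i]\le_{V_i} v$, $x[A_i]\not\le_{V_i} v$, $y[A_i]\le_{V_i} v$, $y[A_i]\not\le_{V_i} v$; the formula induces $t_1\succeq t_2\iff F(t_1,t_2)$. Operator $\mathsf{T}$ maps a formula to one inducing the transitive closure over $\mathcal{D}$ of the induced relation. Operator $\mathsf{S}$ (specificity-based refinement): repeat rounds; in a round, for each statement $P_i$ let $\mathrm{Impl}(P_i)$ be the set of statements $P_j$ such that $P_j(t_2,t_1)\Rightarrow P_i(t_1,t_2)$ for all $t_1,t_2\in\mathcal{D}$ but not conversely; simultaneously replace every $P_i$ with nonempty $\mathrm{Impl}(P_i)$ by $P_i(x,y)\wedge\bigwedge_{P_j\in \mathrm{Impl}(P_i)}\neg P_j(y,x)$; stop when no $\mathrm{Impl}$ set is nonempty. After each operator, contradictory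 clauses and subsumed statements are removed. For $X\in\{\mathsf{T},\mathsf{S}\}^*$, $\succeq_X$ is the relation induced by applying the operators of $X$ in order to the initial formula. Containment $X\sqsubseteq Y$ means $\succeq_X\subseteq\succeq_Y$ for every initial preference formula. *)

theory Defs
  imports Main
begin

text \<open>Attributes are indexed by 0..d-1; attribute i has taxonomy (V i, le i).
  All values live in one ambient type 'v.\<close>

definition taxonomies :: "nat \<Rightarrow> (nat \<Rightarrow> 'v set) \<Rightarrow> (nat \<Rightarrow> 'v \<Rightarrow> 'v \<Rightarrow> bool) \<Rightarrow> bool" where
  "taxonomies d V le \<longleftrightarrow> (\<forall>i<d.
     (\<forall>a\<in>V i. le i a a) \<and>
     (\<forall>a\<in>V i. \<forall>b\<in>V i. le i a b \<and> le i b a \<longrightarrow> a = b) \<and>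
     (\<forall>a\<in>V i. \<forall>b\<in>V i. \<forall>c\<in>V i. le i a b \<and> le i b c \<longrightarrow> le i a c))"

type_synonym 'v ttuple = "nat \<Rightarrow> 'v option"

text \<open>The set D of all t-tuples over all t-schemas (subsets of the attributes).\<close>
definition tuples :: "nat \<Rightarrow> (nat \<Rightarrow> 'v set) \<Rightarrow> 'v ttuple set" where
  "tuples d V = {t. dom t \<subseteq> {..<d} \<and> (\<forall>i w. t i = Some w \<longrightarrow> w \<in> V i)}"

text \<open>Atom (on_x, i, pos, v): if on_x the atom talks about x else about y;
  pos = True means  z[A_i] \<le> v,  pos = False means  z[A_i] \<not>\<le> v.\<close>
datatype 'v atom = Atom bool nat bool 'v

type_synonym 'v clause = "'v atom list"
type_synonym 'v stmt = "'v clause list"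
type_synonym 'v formula = "'v stmt list"

fun holds_atom :: "(nat \<Rightarrow> 'v \<Rightarrow> 'v \<Rightarrow> bool) \<Rightarrow> 'v atom \<Rightarrow> 'v ttuple \<Rightarrow> 'v ttuple \<Rightarrow> bool" where
  "holds_atom le (Atom onx i pos v) t1 t2 =
     (let t = (if onx then t1 else t2) in
      (case t i of None \<Rightarrow> \<not> pos | Some w \<Rightarrow> (le i w v = pos)))"

definition holds_clause :: "(nat \<Rightarrow> 'v \<Rightarrow> 'v \<Rightarrow> bool) \<Rightarrow> 'v clause \<Rightarrow> 'v ttuple \<Rightarrow> 'v ttuple \<Rightarrow> bool" where
  "holds_clause le c t1 t2 = (\<forall>a\<in>set c. holds_atom le a t1 t2)"

definition holds_stmt :: "(nat \<Rightarrow> 'v \<Rightarrow> 'v \<Rightarrow> bool) \<Rightarrow> 'v stmt \<Rightarrow> 'v ttuple \<Rightarrow> 'v ttuple \<Rightarrow> bool" where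
  "holds_stmt le P t1 t2 = (\<exists>c\<in>set P. holds_clause le c t1 t2)"

definition holds_formula :: "(nat \<Rightarrow> 'v \<Rightarrow> 'v \<Rightarrow> bool) \<Rightarrow> 'v formula \<Rightarrow> 'v ttuple \<Rightarrow> 'v ttuple \<Rightarrow> bool" where
  "holds_formula le F t1 t2 = (\<exists>P\<in>set F. holds_stmt le P t1 t2)"

definition induced :: "nat \<Rightarrow> (nat \<Rightarrow> 'v set) \<Rightarrow> (nat \<Rightarrow> 'v \<Rightarrow> 'v \<Rightarrow> bool) \<Rightarrow> 'v formula
    \<Rightarrow> ('v ttuple \<times> 'v ttuple) set" where
  "induced d V le F = {(t1, t2). t1 \<in> tuples d V \<and> t2 \<in> tuples d V \<and> holds_formula le F t1 t2}"

definition clause_sat :: "nat \<Rightarrow> (nat \<Rightarrow> 'v set) \<Rightarrow> (nat \<Rightarrow> 'v \<Rightarrow> 'v \<Rightarrow> bool) \<Rightarrow> 'v clause \<Rightarrow> bool" where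
  "clause_sat d V le c = (\<exists>t1\<in>tuples d V. \<exists>t2\<in>tuples d V. holds_clause le c t1 t2)"

fun wf_atom :: "nat \<Rightarrow> (nat \<Rightarrow> 'v set) \<Rightarrow> 'v atom \<Rightarrow> bool" where
  "wf_atom d V (Atom onx i pos v) = (i < d \<and> v \<in> V i)"

definition wf_formula :: "nat \<Rightarrow> (nat \<Rightarrow> 'v set) \<Rightarrow> (nat \<Rightarrow> 'v \<Rightarrow> 'v \<Rightarrow> bool) \<Rightarrow> 'v formula \<Rightarrow> bool" where
  "wf_formula d V le F = (\<forall>P\<in>set F. \<forall>c\<in>set P. clause_sat d V le c \<and> (\<forall>a\<in>set c. wf_atom d V a))"

fun neg_atom :: "'v atom \<Rightarrow> 'v atom" where
  "neg_atom (Atom onx i pos v) = Atom onx i (\<not> pos) v"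

fun swap_atom :: "'v atom \<Rightarrow> 'v atom" where
  "swap_atom (Atom onx i pos v) = Atom (\<not> onx) i pos v"

definition swap_stmt :: "'v stmt \<Rightarrow> 'v stmt" where
  "swap_stmt P = map (map swap_atom) P"

definition conj_stmt :: "'v stmt \<Rightarrow> 'v stmt \<Rightarrow> 'v stmt" where
  "conj_stmt A B = [a @ b. a \<leftarrow> A, b \<leftarrow> B]"

definition neg_stmt :: "'v stmt \<Rightarrow> 'v stmt" where
  "neg_stmt P = foldr (\<lambda>c acc. conj_stmt (map (\<lambda>a. [neg_atom a]) c) acc) P [[]]"

definition stmt_imp :: "nat \<Rightarrow> (nat \<Rightarrow> 'v set) \<Rightarrow> (nat \<Rightarrow> 'v \<Rightarrow> 'v \<Rightarrow> bool) \<Rightarrow> 'v stmt \<Rightarrow> 'v stmt \<Rightarrow> bool" where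
  "stmt_imp d V le P Q = (\<forall>t1\<in>tuples d V. \<forall>t2\<in>tuples d V. holds_stmt le P t1 t2 \<longrightarrow> holds_stmt le Q t1 t2)"

text \<open>A statement is dropped if it is implied by another statement; among
  equivalent statements only the first occurrence is kept.\<close>
definition remove_subsumed :: "nat \<Rightarrow> (nat \<Rightarrow> 'v set) \<Rightarrow> (nat \<Rightarrow> 'v \<Rightarrow> 'v \<Rightarrow> bool) \<Rightarrow> 'v formula \<Rightarrow> 'v formula" where
  "remove_subsumed d V le F =
     map snd (filter (\<lambda>(i, P). \<not> (\<exists>j<length F. j \<noteq> i \<and> stmt_imp d V le P (F ! j) \<and>
                                        (\<not> stmt_imp d V le (F ! j) P \<or> j < i)))
                     (zip [0..<length F] F))"

definition cleanup :: "nat \<Rightarrow> (nat \<Rightarrow> 'v set) \<Rightarrow> (nat \<Rightarrow> 'v \<Rightarrow> 'v \<Rightarrow> bool) \<Rightarrow> 'v formula \<Rightarrow> 'v formula" where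
  "cleanup d V le F = remove_subsumed d V le (map (filter (clause_sat d V le)) F)"

definition in_impl :: "nat \<Rightarrow> (nat \<Rightarrow> 'v set) \<Rightarrow> (nat \<Rightarrow> 'v \<Rightarrow> 'v \<Rightarrow> bool) \<Rightarrow> 'v stmt \<Rightarrow> 'v stmt \<Rightarrow> bool" where
  "in_impl d V le P Q =
     ((\<forall>t1\<in>tuples d V. \<forall>t2\<in>tuples d V. holds_stmt le Q t2 t1 \<longrightarrow> holds_stmt le P t1 t2) \<and>
      \<not> (\<forall>t1\<in>tuples d V. \<forall>t2\<in>tuples d V. holds_stmt le P t1 t2 \<longrightarrow> holds_stmt le Q t2 t1))"

definition impl_list :: "nat \<Rightarrow> (nat \<Rightarrow> 'v set) \<Rightarrow> (nat \<Rightarrow> 'v \<Rightarrow> 'v \<Rightarrow> bool) \<Rightarrow> 'v formula \<Rightarrow> 'v stmt \<Rightarrow> 'v stmt list" where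
  "impl_list d V le F P = filter (in_impl d V le P) F"

definition S_round :: "nat \<Rightarrow> (nat \<Rightarrow> 'v set) \<Rightarrow> (nat \<Rightarrow> 'v \<Rightarrow> 'v \<Rightarrow> bool) \<Rightarrow> 'v formula \<Rightarrow> 'v formula" where
  "S_round d V le F = map (\<lambda>P. let I = impl_list d V le F P in
      if I = [] then P else foldl (\<lambda>acc Q. conj_stmt acc (neg_stmt (swap_stmt Q))) P I) F"

definition S_stable :: "nat \<Rightarrow> (nat \<Rightarrow> 'v set) \<Rightarrow> (nat \<Rightarrow> 'v \<Rightarrow> 'v \<Rightarrow> bool) \<Rightarrow> 'v formula \<Rightarrow> bool" where
  "S_stable d V le F = (\<forall>P\<in>set F. impl_list d V le F P = [])"

definition S_op :: "nat \<Rightarrow> (nat \<Rightarrow> 'v set) \<Rightarrow> (nat \<Rightarrow> 'v \<Rightarrow> 'v \<Rightarrow> bool) \<Rightarrow> 'v formula \<Rightarrow> 'v formula" where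
  "S_op d V le F = cleanup d V le
     ((S_round d V le ^^ (LEAST n. S_stable d V le ((S_round d V le ^^ n) F))) F)"

definition T_impl :: "nat \<Rightarrow> (nat \<Rightarrow> 'v set) \<Rightarrow> (nat \<Rightarrow> 'v \<Rightarrow> 'v \<Rightarrow> bool) \<Rightarrow> ('v formula \<Rightarrow> 'v formula) \<Rightarrow> bool" where
  "T_impl d V le Tf = (\<forall>F. wf_formula d V le F \<longrightarrow>
      wf_formula d V le (Tf F) \<and> induced d V le (Tf F) = trancl (induced d V le F))"

datatype op = OpT | OpS

fun apply_op :: "nat \<Rightarrow> (nat \<Rightarrow> 'v set) \<Rightarrow> (nat \<Rightarrow> 'v \<Rightarrow> 'v \<Rightarrow> bool) \<Rightarrow> ('v formula \<Rightarrow> 'v formula)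
    \<Rightarrow> op \<Rightarrow> 'v formula \<Rightarrow> 'v formula" where
  "apply_op d V le Tf OpT F = cleanup d V le (Tf F)"
| "apply_op d V le Tf OpS F = S_op d V le F"

text \<open>Apply the operators of X in order (leftmost first).\<close>
definition apply_ops :: "nat \<Rightarrow> (nat \<Rightarrow> 'v set) \<Rightarrow> (nat \<Rightarrow> 'v \<Rightarrow> 'v \<Rightarrow> bool) \<Rightarrow> ('v formula \<Rightarrow> 'v formula)
    \<Rightarrow> op list \<Rightarrow> 'v formula \<Rightarrow> 'v formula" where
  "apply_ops d V le Tf X F = fold (apply_op d V le Tf) X F"

definition pref_rel :: "nat \<Rightarrow> (nat \<Rightarrow> 'v set) \<Rightarrow> (nat \<Rightarrow> 'v \<Rightarrow> 'v \<Rightarrow> bool) \<Rightarrow> ('v formula \<Rightarrow> 'v formula)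
    \<Rightarrow> op list \<Rightarrow> 'v formula \<Rightarrow> ('v ttuple \<times> 'v ttuple) set" where
  "pref_rel d V le Tf X F = induced d V le (apply_ops d V le Tf X F)"

definition contained :: "nat \<Rightarrow> (nat \<Rightarrow> 'v set) \<Rightarrow> (nat \<Rightarrow> 'v \<Rightarrow> 'v \<Rightarrow> bool) \<Rightarrow> ('v formula \<Rightarrow> 'v formula)
    \<Rightarrow> op list \<Rightarrow> op list \<Rightarrow> bool" where
  "contained d V le Tf X Y = (\<forall>F. wf_formula d V le F \<longrightarrow> pref_rel d V le Tf X F \<subseteq> pref_rel d V le Tf Y F)"

end

theory Submission
  imports Defs
begin

text \<open>The relation of \<open>X\<close>T is transitive, being a transitive closure; S only drops pairs from
  the relation it is applied to, so the closure taken by the final T stays inside the relation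
  of \<open>X\<close>T. The clean-up after each operator does not change the induced relation, and every
  operator keeps formulas well-formed, so T may be applied again.\<close>

definition stmt_atoms_wf :: "nat \<Rightarrow> (nat \<Rightarrow> 'v set) \<Rightarrow> 'v stmt \<Rightarrow> bool" where
  "stmt_atoms_wf d V P \<longleftrightarrow> (\<forall>c\<in>set P. \<forall>a\<in>set c. wf_atom d V a)"

lemma stmt_atoms_wf_conj_stmt:
  "stmt_atoms_wf d V A \<Longrightarrow> stmt_atoms_wf d V B \<Longrightarrow> stmt_atoms_wf d V (conj_stmt A B)"
  unfolding stmt_atoms_wf_def conj_stmt_def by auto

lemma wf_atom_neg_atom: "wf_atom d V a \<Longrightarrow> wf_atom d V (neg_atom a)"
  by (cases a) auto

lemma wf_atom_swap_atom: "wf_atom d V a \<Longrightarrow> wf_atom d V (swap_atom a)"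
  by (cases a) auto

lemma stmt_atoms_wf_swap_stmt: "stmt_atoms_wf d V P \<Longrightarrow> stmt_atoms_wf d V (swap_stmt P)"
  unfolding stmt_atoms_wf_def swap_stmt_def by (auto intro: wf_atom_swap_atom)

lemma stmt_atoms_wf_neg_stmt: "stmt_atoms_wf d V P \<Longrightarrow> stmt_atoms_wf d V (neg_stmt P)"
  unfolding neg_stmt_def
proof (induction P)
  case Nil
  then show ?case by (simp add: stmt_atoms_wf_def)
next
  case (Cons c P)
  then have "stmt_atoms_wf d V (map (\<lambda>a. [neg_atom a]) c)" and "stmt_atoms_wf d V P"
    unfolding stmt_atoms_wf_def by (auto intro: wf_atom_neg_atom)
  with Cons.IH show ?case by (simp add: stmt_atoms_wf_conj_stmt)
qed

lemma stmt_atoms_wf_refine: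
  "stmt_atoms_wf d V P \<Longrightarrow> \<forall>Q\<in>set I. stmt_atoms_wf d V Q \<Longrightarrow>
   stmt_atoms_wf d V (foldl (\<lambda>acc Q. conj_stmt acc (neg_stmt (swap_stmt Q))) P I)"
  by (induction I arbitrary: P)
    (auto intro!: stmt_atoms_wf_conj_stmt stmt_atoms_wf_neg_stmt stmt_atoms_wf_swap_stmt)

lemma stmt_atoms_wf_S_round:
  "\<forall>P\<in>set F. stmt_atoms_wf d V P \<Longrightarrow> \<forall>P\<in>set (S_round d V le F). stmt_atoms_wf d V P"
  unfolding S_round_def impl_list_def Let_def by (auto intro!: stmt_atoms_wf_refine)

lemma stmt_atoms_wf_S_round_funpow:
  "\<forall>P\<in>set F. stmt_atoms_wf d V P \<Longrightarrow> \<forall>P\<in>set ((S_round d V le ^^ n) F). stmt_atoms_wf d V P"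
  by (induction n) (auto dest: stmt_atoms_wf_S_round)

lemma wf_formula_imp_stmt_atoms_wf:
  "wf_formula d V le F \<Longrightarrow> P \<in> set F \<Longrightarrow> stmt_atoms_wf d V P"
  unfolding wf_formula_def stmt_atoms_wf_def by auto

lemma set_remove_subsumed: "set (remove_subsumed d V le F) \<subseteq> set F"
  unfolding remove_subsumed_def by (auto dest: set_zip_rightD)

lemma wf_formula_cleanup:
  "\<forall>P\<in>set F. stmt_atoms_wf d V P \<Longrightarrow> wf_formula d V le (cleanup d V le F)"
  unfolding wf_formula_def cleanup_def stmt_atoms_wf_def
  using set_remove_subsumed[of d V le "map (filter (clause_sat d V le)) F"]
  by fastforce

lemma wf_formula_S_op: "wf_formula d V le F \<Longrightarrow> wf_formula d V le (S_op d V le F)"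
  unfolding S_op_def
  by (intro wf_formula_cleanup stmt_atoms_wf_S_round_funpow) (auto dest: wf_formula_imp_stmt_atoms_wf)

lemma wf_formula_apply_op:
  assumes "T_impl d V le Tf" and "wf_formula d V le F"
  shows "wf_formula d V le (apply_op d V le Tf o' F)"
proof (cases o')
  case OpT
  with assms show ?thesis
    unfolding T_impl_def by (auto intro!: wf_formula_cleanup dest: wf_formula_imp_stmt_atoms_wf)
next
  case OpS
  with assms show ?thesis by (simp add: wf_formula_S_op)
qed

lemma wf_formula_apply_ops:
  assumes "T_impl d V le Tf" and "wf_formula d V le F"
  shows "wf_formula d V le (apply_ops d V le Tf X F)"
  using assms(2) unfolding apply_ops_def
  by (induction X arbitrary: F) (auto intro: wf_formula_apply_op[OF assms(1)])

definition implied_indices :: "nat \<Rightarrow> (nat \<Rightarrow> 'v set) \<Rightarrow> (nat \<Rightarrow> 'v \<Rightarrow> 'v \<Rightarrow> bool) \<Rightarrow> 'v formula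
    \<Rightarrow> nat \<Rightarrow> nat set" where
  "implied_indices d V le F k = {j. j < length F \<and> stmt_imp d V le (F ! k) (F ! j)}"

lemma stmt_imp_refl: "stmt_imp d V le P P"
  unfolding stmt_imp_def by auto

lemma stmt_imp_trans: "stmt_imp d V le P Q \<Longrightarrow> stmt_imp d V le Q R \<Longrightarrow> stmt_imp d V le P R"
  unfolding stmt_imp_def by blast

lemma implied_indices_eq:
  "stmt_imp d V le (F ! k) (F ! j) \<Longrightarrow> stmt_imp d V le (F ! j) (F ! k) \<Longrightarrow>
   implied_indices d V le F j = implied_indices d V le F k"
  unfolding implied_indices_def by (blast intro: stmt_imp_trans)

lemma card_implied_indices_less:
  assumes "k < length F" and "stmt_imp d V le (F ! k) (F ! j)" and "\<not> stmt_imp d V le (F ! j) (F ! k)"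
  shows "card (implied_indices d V le F j) < card (implied_indices d V le F k)"
proof (rule psubset_card_mono)
  show "finite (implied_indices d V le F k)"
    unfolding implied_indices_def by auto
  have "implied_indices d V le F j \<subseteq> implied_indices d V le F k"
    unfolding implied_indices_def using assms(2) by (blast intro: stmt_imp_trans)
  moreover have "k \<in> implied_indices d V le F k - implied_indices d V le F j"
    unfolding implied_indices_def using assms(1,3) stmt_imp_refl by auto
  ultimately show "implied_indices d V le F j \<subset> implied_indices d V le F k"
    by blast
qed

lemma nth_in_remove_subsumed:
  assumes "k < length F"
    and "\<not> (\<exists>j<length F. j \<noteq> k \<and> stmt_imp d V le (F ! k) (F ! j) \<and>
                          (\<not> stmt_imp d V le (F ! j) (F ! k) \<or> j < k))"
  shows "F ! k \<in> set (remove_subsumed d V le F)"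
proof -
  have "(k, F ! k) \<in> set (zip [0..<length F] F)"
    using assms(1) by (auto simp: set_zip intro!: exI[of _ k])
  with assms(2) show ?thesis
    unfolding remove_subsumed_def by (force intro: rev_image_eqI[of "(k, F ! k)"])
qed

text \<open>A dropped statement is implied by a strictly stronger one, or by an equivalent one of
  smaller index; both decrease the measure below, so some kept statement implies it.\<close>

lemma remove_subsumed_covers:
  assumes "k < length F"
  shows "\<exists>m<length F. stmt_imp d V le (F ! k) (F ! m) \<and> F ! m \<in> set (remove_subsumed d V le F)"
  using assms
proof (induction "card (implied_indices d V le F k) * length F + k" arbitrary: k rule: less_induct)
  case less
  show ?case
  proof (cases "\<exists>j<length F. j \<noteq> k \<and> stmt_imp d V le (F ! k) (F ! j) \<and>
                              (\<not> stmt_imp d V le (F ! j) (F ! k) \<or> j < k)")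
    case False
    with less.prems have "F ! k \<in> set (remove_subsumed d V le F)"
      by (rule nth_in_remove_subsumed)
    with less.prems show ?thesis using stmt_imp_refl by blast
  next
    case True
    then obtain j where j: "j < length F" "stmt_imp d V le (F ! k) (F ! j)"
      and stronger: "\<not> stmt_imp d V le (F ! j) (F ! k) \<or> j < k" by blast
    have "card (implied_indices d V le F j) * length F + j
        < card (implied_indices d V le F k) * length F + k"
    proof (cases "stmt_imp d V le (F ! j) (F ! k)")
      case True
      with j(2) have "implied_indices d V le F j = implied_indices d V le F k"
        by (rule implied_indices_eq)
      with True stronger show ?thesis by simp
    next
      case False
      with less.prems j(2) have "card (implied_indices d V le F j) < card (implied_indices d V le F k)"
        by (rule card_implied_indices_less)
      then have "card (implied_indices d V le F j) + 1 \<le> card (implied_indices d V le F k)"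
        by simp
      then have "(card (implied_indices d V le F j) + 1) * length F
          \<le> card (implied_indices d V le F k) * length F"
        by (rule mult_right_mono) simp
      with j(1) show ?thesis by (simp add: algebra_simps)
    qed
    from less.hyps[OF this j(1)] obtain m where "m < length F" "stmt_imp d V le (F ! j) (F ! m)"
      "F ! m \<in> set (remove_subsumed d V le F)" by blast
    with j(2) show ?thesis by (blast intro: stmt_imp_trans)
  qed
qed

lemma induced_cleanup_subset: "induced d V le (cleanup d V le F) \<subseteq> induced d V le F"
  unfolding induced_def cleanup_def holds_formula_def holds_stmt_def
  using set_remove_subsumed[of d V le "map (filter (clause_sat d V le)) F"]
  by fastforce

lemma induced_subset_cleanup: "induced d V le F \<subseteq> induced d V le (cleanup d V le F)"
proof safe
  fix t1 t2 assume "(t1, t2) \<in> induced d V le F"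
  then have tuples: "t1 \<in> tuples d V" "t2 \<in> tuples d V" and "holds_formula le F t1 t2"
    unfolding induced_def by auto
  then obtain k c where k: "k < length F" "c \<in> set (F ! k)" and c: "holds_clause le c t1 t2"
    unfolding holds_formula_def holds_stmt_def by (metis in_set_conv_nth)
  let ?F' = "map (filter (clause_sat d V le)) F"
  have "clause_sat d V le c"
    unfolding clause_sat_def using tuples c by blast
  with k c have "holds_stmt le (?F' ! k) t1 t2"
    unfolding holds_stmt_def by auto
  moreover obtain m where "stmt_imp d V le (?F' ! k) (?F' ! m)"
    and kept: "?F' ! m \<in> set (remove_subsumed d V le ?F')"
    using remove_subsumed_covers[of k ?F' d V le] k by auto
  ultimately have "holds_stmt le (?F' ! m) t1 t2"
    using tuples unfolding stmt_imp_def by blast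
  with kept tuples show "(t1, t2) \<in> induced d V le (cleanup d V le F)"
    unfolding induced_def holds_formula_def cleanup_def by blast
qed

lemma induced_cleanup: "induced d V le (cleanup d V le F) = induced d V le F"
  using induced_cleanup_subset induced_subset_cleanup by blast

lemma holds_conj_stmtD: "holds_stmt le (conj_stmt A B) t1 t2 \<Longrightarrow> holds_stmt le A t1 t2"
  unfolding holds_stmt_def conj_stmt_def holds_clause_def by auto

lemma holds_refineD:
  "holds_stmt le (foldl (\<lambda>acc Q. conj_stmt acc (neg_stmt (swap_stmt Q))) P I) t1 t2 \<Longrightarrow>
   holds_stmt le P t1 t2"
  by (induction I arbitrary: P) (auto dest: holds_conj_stmtD)

lemma holds_S_roundD: "holds_formula le (S_round d V le F) t1 t2 \<Longrightarrow> holds_formula le F t1 t2"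
  unfolding holds_formula_def S_round_def Let_def
  by (auto split: if_splits dest: holds_refineD)

lemma holds_S_round_funpowD:
  "holds_formula le ((S_round d V le ^^ n) F) t1 t2 \<Longrightarrow> holds_formula le F t1 t2"
  by (induction n) (auto dest: holds_S_roundD)

lemma induced_S_op_subset: "induced d V le (S_op d V le F) \<subseteq> induced d V le F"
  using induced_cleanup_subset[of d V le] unfolding S_op_def
  by (fastforce simp: induced_def dest: holds_S_round_funpowD)

lemma induced_apply_op_T:
  "T_impl d V le Tf \<Longrightarrow> wf_formula d V le F \<Longrightarrow>
   induced d V le (apply_op d V le Tf OpT F) = trancl (induced d V le F)"
  unfolding T_impl_def by (simp add: induced_cleanup)

theorem mainTheorem3:
  fixes d :: nat and V :: "nat \<Rightarrow> 'v set" and le :: "nat \<Rightarrow> 'v \<Rightarrow> 'v \<Rightarrow> bool"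
    and Tf :: "'v formula \<Rightarrow> 'v formula" and X :: "op list"
  assumes "taxonomies d V le"
    and "T_impl d V le Tf"
  shows "contained d V le Tf (X @ [OpT, OpS, OpT]) (X @ [OpT])"
  unfolding contained_def
proof (intro allI impI)
  fix F assume "wf_formula d V le F"
  define H where "H = apply_ops d V le Tf (X @ [OpT]) F"
  have wf_H: "wf_formula d V le H"
    unfolding H_def using assms(2) \<open>wf_formula d V le F\<close> by (rule wf_formula_apply_ops)
  have trans_H: "trans (induced d V le H)"
    using induced_apply_op_T[OF assms(2) wf_formula_apply_ops[OF assms(2) \<open>wf_formula d V le F\<close>]]
    by (simp add: H_def apply_ops_def)
  have "pref_rel d V le Tf (X @ [OpT, OpS, OpT]) F = trancl (induced d V le (S_op d V le H))"
    using induced_apply_op_T[OF assms(2) wf_formula_S_op[OF wf_H]]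
    by (simp add: pref_rel_def apply_ops_def H_def)
  also have "\<dots> \<subseteq> trancl (induced d V le H)"
    by (rule trancl_mono_subset[OF induced_S_op_subset])
  also have "\<dots> = pref_rel d V le Tf (X @ [OpT]) F"
    using trans_H by (simp add: pref_rel_def H_def)
  finally show "pref_rel d V le Tf (X @ [OpT, OpS, OpT]) F \<subseteq> pref_rel d V le Tf (X @ [OpT]) F" .
qed

end
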